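(* For integers $t,k\ge0$, the number $b(t,t+2k)$ of marked diagrams $t\to t+2k$ depends only on $t+k$; if $t+k=m$, this number is $\binom{2m}{m}$.
   Context: A Temperley–Lieb diagram $t\to s$ is a rectangle with $t$ points on its bottom edge and $s$ points on its top edge, joined in pairs by $(t+s)/2$ non-crossing arcs, up to isotopy. The arcs divide the rectangle into regions, among which there is a unique leftmost region (the one adjacent to the left edge). A marked diagram $t\to s$ is a Temperley–Lieb diagram $t\to s$ in which each arc lying on the boundary of the leftmost region carries either no mark or exactly one mark (dot), and other arcs carry no mark. *)

theory Defs
  imports Main
begin

text \<open>Boundary points of the rectangle: Bot i (i < t) on the bottom edge,
  numbered left to right, and Top j (j < s) on the top edge, numbered left to right.\<close>
datatype pt = Bot nat | Top nat

definition pts :: "nat \<Rightarrow> nat \<Rightarrow> pt set" where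
  "pts t s = Bot ` {..<t} \<union> Top ` {..<s}"

text \<open>Position of a point when walking along the boundary of the rectangle,
  starting just after the left edge: bottom edge left to right, then the right
  edge, then the top edge right to left, ending at the left edge.\<close>
fun pos :: "nat \<Rightarrow> nat \<Rightarrow> pt \<Rightarrow> nat" where
  "pos t s (Bot i) = i"
| "pos t s (Top j) = t + (s - 1 - j)"

definition perfect_matching :: "pt set \<Rightarrow> pt set set \<Rightarrow> bool" where
  "perfect_matching P M \<longleftrightarrow>
     (\<forall>A\<in>M. A \<subseteq> P \<and> card A = 2) \<and> (\<forall>p\<in>P. \<exists>!A\<in>M. p \<in> A)"

definition crossing :: "nat \<Rightarrow> nat \<Rightarrow> pt set \<Rightarrow> pt set \<Rightarrow> bool" where
  "crossing t s A B \<longleftrightarrow> (\<exists>a b c d. A = {a, b} \<and> B = {c, d} \<and>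
     pos t s a < pos t s c \<and> pos t s c < pos t s b \<and> pos t s b < pos t s d)"

text \<open>Temperley--Lieb diagrams t -> s (up to isotopy) = non-crossing perfect matchings
  of the boundary points.\<close>
definition TL_diagrams :: "nat \<Rightarrow> nat \<Rightarrow> pt set set set" where
  "TL_diagrams t s = {M. perfect_matching (pts t s) M \<and>
     (\<forall>A\<in>M. \<forall>B\<in>M. \<not> crossing t s A B)}"

definition nested_in :: "nat \<Rightarrow> nat \<Rightarrow> pt set \<Rightarrow> pt set \<Rightarrow> bool" where
  "nested_in t s A B \<longleftrightarrow> (\<exists>c d. B = {c, d} \<and>
     (\<forall>x\<in>A. pos t s c < pos t s x \<and> pos t s x < pos t s d))"

text \<open>Arcs on the boundary of the leftmost region (the region adjacent to the left
  edge): exactly those arcs not nested inside any other arc.\<close>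
definition leftmost_arcs :: "nat \<Rightarrow> nat \<Rightarrow> pt set set \<Rightarrow> pt set set" where
  "leftmost_arcs t s M = {A\<in>M. \<not> (\<exists>B\<in>M. nested_in t s A B)}"

text \<open>Marked diagrams: a TL diagram together with the set of dotted arcs, which must
  lie on the boundary of the leftmost region (each carries at most one dot).\<close>
definition marked_diagrams :: "nat \<Rightarrow> nat \<Rightarrow> (pt set set \<times> pt set set) set" where
  "marked_diagrams t s = {(M, D). M \<in> TL_diagrams t s \<and> D \<subseteq> leftmost_arcs t s M}"

definition b :: "nat \<Rightarrow> nat \<Rightarrow> nat" where
  "b t s = card (marked_diagrams t s)"

end

theory Submission
  imports Defs
begin

text \<open>
  Removing the arc {a, y} through the first point a
  splits a matching of an interval into an arbitrary matching of the points strictly inside that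
  arc and a matching of the points to its right; the removed arc is outer, the arcs inside it are
  not, and the outer arcs to its right stay outer. Hence the numbers C n of noncrossing matchings
  and F n of marked ones on n points satisfy C (n + 2) = sum (i <= n) C i * C (n - i) and
  F (n + 2) = 2 * sum (i <= n) C i * F (n - i). Cutting a word of steps +1/-1 at its first return
  to height 0 shows that Dyck words and balanced words obey the same recursions with the same
  initial values, so F n is the number of balanced words of length n, which is (2m choose m)
  for n = t + (t + 2k) = 2m.
\<close>

section \<open>Dyck words and balanced words\<close>

fun height :: "bool list \<Rightarrow> int" where
  "height [] = 0"
| "height (x # xs) = (if x then 1 else -1) + height xs"

lemma height_append [simp]: "height (xs @ ys) = height xs + height ys"
  by (induction xs) auto

lemma height_map_Not [simp]: "height (map Not xs) = - height xs"
  by (induction xs) auto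

lemma height_eq_trues_minus_falses: "height xs = 2 * int (length (filter id xs)) - int (length xs)"
  by (induction xs) auto

definition is_dyck :: "bool list \<Rightarrow> bool" where
  "is_dyck xs \<longleftrightarrow> height xs = 0 \<and> (\<forall>k. 0 \<le> height (take k xs))"

definition dyck_words :: "nat \<Rightarrow> bool list set" where
  "dyck_words n = {xs. length xs = n \<and> is_dyck xs}"

definition balanced_words :: "nat \<Rightarrow> bool list set" where
  "balanced_words n = {xs. length xs = n \<and> height xs = 0}"

lemma finite_bool_lists_length: "finite {xs :: bool list. length xs = n}"
  using finite_lists_length_eq[of "UNIV :: bool set" n] by simp

lemma finite_dyck_words: "finite (dyck_words n)"
  by (rule finite_subset[OF _ finite_bool_lists_length[of n]]) (auto simp: dyck_words_def)

lemma finite_balanced_words: "finite (balanced_words n)"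
  by (rule finite_subset[OF _ finite_bool_lists_length[of n]]) (auto simp: balanced_words_def)

lemma card_bool_lists_count_True:
  "card {xs :: bool list. length xs = n \<and> length (filter id xs) = k} = n choose k"
proof -
  have positions: "{i. i < n \<and> map (\<lambda>i. i \<in> K) [0..<n] ! i} = K" if "K \<subseteq> {0..<n}" for K
    using that by auto
  have "bij_betw (\<lambda>xs. {i. i < n \<and> xs ! i})
      {xs. length xs = n \<and> length (filter id xs) = k} {K \<in> Pow {0..<n}. card K = k}"
    by (rule bij_betw_byWitness[where f' = "\<lambda>K. map (\<lambda>i. i \<in> K) [0..<n]"])
      (auto simp: length_filter_conv_card positions intro: nth_equalityI)
  then show ?thesis
    unfolding binomial_def by (rule bij_betw_same_card)
qed

lemma card_balanced_words: "card (balanced_words (2 * m)) = (2 * m) choose m"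
proof -
  have "balanced_words (2 * m) = {xs. length xs = 2 * m \<and> length (filter id xs) = m}"
    unfolding balanced_words_def height_eq_trues_minus_falses by auto
  then show ?thesis
    by (simp add: card_bool_lists_count_True)
qed

lemma first_descent:
  assumes "height (take k r) < 0"
  shows "\<exists>u v. r = u @ False # v \<and> is_dyck u"
  using assms
proof (induction r arbitrary: k rule: rev_induct)
  case Nil
  then show ?case by simp
next
  case (snoc x r)
  show ?case
  proof (cases "\<exists>j. height (take j r) < 0")
    case True
    then obtain u v where "r = u @ False # v" "is_dyck u"
      using snoc.IH by blast
    then show ?thesis by auto
  next
    case False
    then have "\<not> k \<le> length r"
      using snoc.prems by auto
    then have "height (r @ [x]) < 0"
      using snoc.prems by simp
    moreover have "0 \<le> height r"
      using False take_all[of r "length r"] by (metis order.refl not_less)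
    ultimately have "\<not> x" "height r = 0"
      by (auto split: if_splits)
    with False show ?thesis
      by (intro exI[of _ r] exI[of _ "[]"]) (auto simp: is_dyck_def not_less)
  qed
qed

lemma first_descent_unique:
  assumes "u @ False # v = u' @ False # v'" "is_dyck u" "is_dyck u'"
  shows "u = u' \<and> v = v'"
proof -
  have no_shorter: "\<not> length w < length w'"
    if "w @ False # x = w' @ False # x'" "is_dyck w" "is_dyck w'" for w x w' x'
  proof
    assume less: "length w < length w'"
    have "take (Suc (length w)) w' = w @ [False]"
      using arg_cong[OF that(1), of "take (Suc (length w))"] less by simp
    then have "height (take (Suc (length w)) w') = -1"
      using \<open>is_dyck w\<close> by (simp add: is_dyck_def)
    with \<open>is_dyck w'\<close> show False
      unfolding is_dyck_def by (metis neg_0_le_iff_le not_one_le_zero)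
  qed
  have "length u = length u'"
    using no_shorter[OF assms] no_shorter[OF assms(1)[symmetric] assms(3,2)] by linarith
  with assms(1) show ?thesis by simp
qed

definition wrap :: "bool list \<times> bool list \<Rightarrow> bool list" where
  "wrap uv = True # fst uv @ False # snd uv"

lemma length_wrap [simp]: "length (wrap (u, v)) = Suc (Suc (length u + length v))"
  by (simp add: wrap_def)

lemma height_wrap [simp]: "height (wrap (u, v)) = height u + height v"
  by (simp add: wrap_def)

lemma inj_on_wrap: "inj_on wrap (Collect is_dyck \<times> UNIV)"
  by (rule inj_onI) (auto simp: wrap_def prod_eq_iff dest: first_descent_unique)

lemma wrap_decomposition:
  assumes "height r = -1"
  obtains u v where "True # r = wrap (u, v)" "is_dyck u" "height v = 0"
proof -
  obtain u v where r: "r = u @ False # v" and u: "is_dyck u"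
    using first_descent[of "length r" r] assms by auto
  with assms have "height v = 0"
    by (simp add: is_dyck_def)
  with r u show ?thesis
    using that by (simp add: wrap_def)
qed

lemma is_dyck_wrap_iff:
  assumes "is_dyck u"
  shows "is_dyck (wrap (u, v)) \<longleftrightarrow> is_dyck v"
proof -
  have prefix_right: "take (Suc (Suc (length u)) + k) (wrap (u, v)) = wrap (u, take k v)" for k
    by (simp add: wrap_def)
  have prefix_left: "take (Suc k) (wrap (u, v)) = True # take k u" if "k \<le> length u" for k
    using that by (simp add: wrap_def)
  have "0 \<le> height (take k (wrap (u, v)))" if "\<forall>k. 0 \<le> height (take k v)" for k
  proof (cases "k \<le> Suc (length u)")
    case True
    then show ?thesis
      using assms prefix_left[of "k - 1"] by (cases k) (auto simp: is_dyck_def)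
  next
    case False
    then obtain j where "k = Suc (Suc (length u)) + j"
      by (metis add_Suc_right le_add1 less_imp_Suc_add not_le plus_1_eq_Suc add.commute)
    then show ?thesis
      using assms that prefix_right[of j] by (simp add: is_dyck_def)
  qed
  moreover have "0 \<le> height (take k v)" if "is_dyck (wrap (u, v))" for k
  proof -
    have "0 \<le> height (take (Suc (Suc (length u)) + k) (wrap (u, v)))"
      using that unfolding is_dyck_def by blast
    then show ?thesis
      unfolding prefix_right using assms by (simp add: is_dyck_def)
  qed
  ultimately show ?thesis
    using assms by (auto simp: is_dyck_def wrap_def)
qed

lemma dyck_words_disjoint: "i \<noteq> j \<Longrightarrow> dyck_words i \<inter> dyck_words j = {}"
  by (auto simp: dyck_words_def)

lemma dyck_words_subset: "dyck_words n \<subseteq> Collect is_dyck"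
  by (auto simp: dyck_words_def)

lemma dyck_words_Suc_Suc:
  "dyck_words (Suc (Suc n)) = (\<Union>i\<le>n. wrap ` (dyck_words i \<times> dyck_words (n - i)))"
proof (intro equalityI subsetI)
  fix xs
  assume xs: "xs \<in> dyck_words (Suc (Suc n))"
  then obtain x r where r: "xs = x # r" "length r = Suc n"
    unfolding dyck_words_def by (auto simp: length_Suc_conv)
  have "0 \<le> height (take 1 xs)"
    using xs unfolding dyck_words_def is_dyck_def by blast
  then have x: "x"
    using r by (cases x) auto
  then have "height r = -1"
    using xs r unfolding dyck_words_def is_dyck_def by simp
  then obtain u v where uv: "xs = wrap (u, v)" "is_dyck u"
    using x r(1) wrap_decomposition by metis
  then have "is_dyck v"
    using xs is_dyck_wrap_iff unfolding dyck_words_def by blast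
  moreover have "length u \<le> n" "length v = n - length u"
    using r uv by (auto simp: wrap_def)
  ultimately show "xs \<in> (\<Union>i\<le>n. wrap ` (dyck_words i \<times> dyck_words (n - i)))"
    using uv by (auto simp: dyck_words_def intro!: bexI[of _ "length u"] image_eqI[of _ _ "(u, v)"])
qed (auto simp: dyck_words_def is_dyck_wrap_iff)

lemma balanced_words_hd_True:
  "{xs \<in> balanced_words (Suc (Suc n)). hd xs} =
    (\<Union>i\<le>n. wrap ` (dyck_words i \<times> balanced_words (n - i)))"
proof (intro equalityI subsetI)
  fix xs
  assume xs: "xs \<in> {xs \<in> balanced_words (Suc (Suc n)). hd xs}"
  then obtain r where r: "xs = True # r" "length r = Suc n"
    unfolding balanced_words_def by (auto simp: length_Suc_conv)
  then have "height r = -1"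
    using xs unfolding balanced_words_def by simp
  then obtain u v where uv: "xs = wrap (u, v)" "is_dyck u" "height v = 0"
    using r(1) wrap_decomposition by metis
  moreover have "length u \<le> n" "length v = n - length u"
    using r uv by (auto simp: wrap_def)
  ultimately show "xs \<in> (\<Union>i\<le>n. wrap ` (dyck_words i \<times> balanced_words (n - i)))"
    by (auto simp: dyck_words_def balanced_words_def
        intro!: bexI[of _ "length u"] image_eqI[of _ _ "(u, v)"])
qed (auto simp: dyck_words_def balanced_words_def is_dyck_def wrap_def)

lemma card_UN_image_Times:
  assumes "inj_on f (\<Union>i\<in>I. A i \<times> B i)" "finite I"
    and "\<And>i j. i \<in> I \<Longrightarrow> j \<in> I \<Longrightarrow> i \<noteq> j \<Longrightarrow> A i \<inter> A j = {}"
    and "\<And>i. i \<in> I \<Longrightarrow> finite (A i)" "\<And>i. i \<in> I \<Longrightarrow> finite (B i)"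
  shows "card (\<Union>i\<in>I. f ` (A i \<times> B i)) = (\<Sum>i\<in>I. card (A i) * card (B i))"
proof -
  have "card (\<Union>i\<in>I. f ` (A i \<times> B i)) = card (\<Union>i\<in>I. A i \<times> B i)"
    using card_image[OF assms(1)] by (simp add: image_UN)
  also have "\<dots> = (\<Sum>i\<in>I. card (A i \<times> B i))"
    using assms(2-5) by (intro card_UN_disjoint) blast+
  finally show ?thesis
    by (simp add: card_cartesian_product)
qed

lemma card_dyck_words_Suc_Suc:
  "card (dyck_words (Suc (Suc n))) = (\<Sum>i\<le>n. card (dyck_words i) * card (dyck_words (n - i)))"
  unfolding dyck_words_Suc_Suc
  using dyck_words_subset
  by (intro card_UN_image_Times inj_on_subset[OF inj_on_wrap])
    (auto simp: finite_dyck_words dyck_words_disjoint)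

lemma card_balanced_words_eq_twice_hd_True:
  assumes "n > 0"
  shows "card (balanced_words n) = 2 * card {xs \<in> balanced_words n. hd xs}"
proof -
  let ?up = "{xs \<in> balanced_words n. hd xs}" and ?down = "{xs \<in> balanced_words n. \<not> hd xs}"
  have "?down = map Not ` ?up"
  proof (intro equalityI subsetI)
    fix xs
    assume "xs \<in> ?down"
    with assms have "map Not xs \<in> ?up"
      by (cases xs) (auto simp: balanced_words_def)
    then show "xs \<in> map Not ` ?up"
      by (intro image_eqI[of _ _ "map Not xs"]) (simp_all add: comp_def)
  next
    fix xs
    assume "xs \<in> map Not ` ?up"
    with assms show "xs \<in> ?down"
      by (auto simp: balanced_words_def hd_map)
  qed
  moreover have "card (map Not ` ?up) = card ?up"
    by (rule card_image) (simp add: inj_on_def)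
  moreover have "balanced_words n = ?up \<union> ?down" "?up \<inter> ?down = {}"
    by auto
  ultimately show ?thesis
    using finite_balanced_words[of n] card_Un_disjoint[of ?up ?down] by simp
qed

lemma card_balanced_words_Suc_Suc:
  "card (balanced_words (Suc (Suc n))) =
    2 * (\<Sum>i\<le>n. card (dyck_words i) * card (balanced_words (n - i)))"
  unfolding card_balanced_words_eq_twice_hd_True[OF zero_less_Suc] balanced_words_hd_True
  using dyck_words_subset
  by (subst card_UN_image_Times, intro inj_on_subset[OF inj_on_wrap])
    (auto simp: finite_dyck_words finite_balanced_words dyck_words_disjoint)

lemma card_dyck_words_0: "card (dyck_words 0) = 1"
  and card_dyck_words_Suc_0: "card (dyck_words (Suc 0)) = 0"
  and card_balanced_words_0: "card (balanced_words 0) = 1"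
  and card_balanced_words_Suc_0: "card (balanced_words (Suc 0)) = 0"
proof -
  have "dyck_words 0 = {[]}" "balanced_words 0 = {[]}"
    by (auto simp: dyck_words_def balanced_words_def is_dyck_def)
  moreover have "dyck_words (Suc 0) = {}" "balanced_words (Suc 0) = {}"
    by (auto simp: dyck_words_def balanced_words_def is_dyck_def length_Suc_conv split: if_splits)
  ultimately show "card (dyck_words 0) = 1" "card (dyck_words (Suc 0)) = 0"
    "card (balanced_words 0) = 1" "card (balanced_words (Suc 0)) = 0"
    by simp_all
qed

section \<open>Noncrossing matchings along a position function\<close>

text \<open>
  The notions of Defs, generalised to an arbitrary type of points ordered by a position function
  p, so that diagrams can be transported to an interval of natural numbers.
\<close>

definition is_matching :: "'a set \<Rightarrow> 'a set set \<Rightarrow> bool" where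
  "is_matching P M \<longleftrightarrow> (\<forall>A\<in>M. A \<subseteq> P \<and> card A = 2) \<and> (\<forall>x\<in>P. \<exists>!A\<in>M. x \<in> A)"

lemma perfect_matching_eq_is_matching: "perfect_matching = is_matching"
  unfolding perfect_matching_def is_matching_def by (intro ext) simp

definition crosses :: "('a \<Rightarrow> nat) \<Rightarrow> 'a set \<Rightarrow> 'a set \<Rightarrow> bool" where
  "crosses p A B \<longleftrightarrow> (\<exists>x\<in>A. \<exists>z\<in>A. \<exists>c\<in>B. \<exists>d\<in>B. p x < p c \<and> p c < p z \<and> p z < p d)"

definition nested :: "('a \<Rightarrow> nat) \<Rightarrow> 'a set \<Rightarrow> 'a set \<Rightarrow> bool" where
  "nested p A B \<longleftrightarrow> (\<exists>c\<in>B. \<exists>d\<in>B. \<forall>x\<in>A. p c < p x \<and> p x < p d)"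

definition noncrossing_matchings :: "('a \<Rightarrow> nat) \<Rightarrow> 'a set \<Rightarrow> 'a set set set" where
  "noncrossing_matchings p P = {M. is_matching P M \<and> (\<forall>A\<in>M. \<forall>B\<in>M. \<not> crosses p A B)}"

definition outer_arcs :: "('a \<Rightarrow> nat) \<Rightarrow> 'a set set \<Rightarrow> 'a set set" where
  "outer_arcs p M = {A \<in> M. \<not> (\<exists>B\<in>M. nested p A B)}"

definition marked_matchings :: "('a \<Rightarrow> nat) \<Rightarrow> 'a set \<Rightarrow> ('a set set \<times> 'a set set) set" where
  "marked_matchings p P = {(M, D). M \<in> noncrossing_matchings p P \<and> D \<subseteq> outer_arcs p M}"

lemma is_matching_arc: "is_matching P M \<Longrightarrow> A \<in> M \<Longrightarrow> A \<subseteq> P \<and> card A = 2"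
  unfolding is_matching_def by blast

lemma is_matching_unique:
  "is_matching P M \<Longrightarrow> x \<in> P \<Longrightarrow> A \<in> M \<Longrightarrow> x \<in> A \<Longrightarrow> B \<in> M \<Longrightarrow> x \<in> B \<Longrightarrow> A = B"
  unfolding is_matching_def by blast

lemma is_matching_covers: "is_matching P M \<Longrightarrow> x \<in> P \<Longrightarrow> \<exists>A\<in>M. x \<in> A"
  unfolding is_matching_def by blast

lemma is_matching_doubleton: "a \<noteq> c \<Longrightarrow> is_matching {a, c} {{a, c}}"
  unfolding is_matching_def by auto

lemma is_matching_Un:
  assumes "is_matching P M" "is_matching Q N" "P \<inter> Q = {}"
  shows "is_matching (P \<union> Q) (M \<union> N)"
  unfolding is_matching_def
proof (intro conjI ballI)
  fix x
  assume "x \<in> P \<union> Q"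
  then consider "x \<in> P" "\<forall>B\<in>N. x \<notin> B" | "x \<in> Q" "\<forall>B\<in>M. x \<notin> B"
    using assms is_matching_arc by blast
  then show "\<exists>!A. A \<in> M \<union> N \<and> x \<in> A"
  proof cases
    case 1
    then have "\<exists>!A. A \<in> M \<and> x \<in> A"
      using assms(1) unfolding is_matching_def by blast
    with 1 show ?thesis
      by blast
  next
    case 2
    then have "\<exists>!A. A \<in> N \<and> x \<in> A"
      using assms(2) unfolding is_matching_def by blast
    with 2 show ?thesis
      by blast
  qed
qed (use assms in \<open>auto simp: is_matching_def\<close>)

lemma is_matching_restrict:
  assumes "is_matching P M" "S \<subseteq> P" "\<And>A. A \<in> M \<Longrightarrow> A \<inter> S \<noteq> {} \<Longrightarrow> A \<subseteq> S"
  shows "is_matching S {A \<in> M. A \<subseteq> S}"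
  unfolding is_matching_def
proof (intro conjI ballI)
  fix x
  assume x: "x \<in> S"
  then obtain A where A: "A \<in> M" "x \<in> A"
    using is_matching_covers[OF assms(1)] assms(2) by blast
  show "\<exists>!A. A \<in> {A \<in> M. A \<subseteq> S} \<and> x \<in> A"
  proof (rule ex1I[of _ A])
    show "A \<in> {A \<in> M. A \<subseteq> S} \<and> x \<in> A"
      using A x assms(3) by blast
    show "B = A" if "B \<in> {A \<in> M. A \<subseteq> S} \<and> x \<in> B" for B
      using that A x assms(2) is_matching_unique[OF assms(1)] by blast
  qed
qed (use is_matching_arc[OF assms(1)] in auto)

lemma is_matching_image:
  assumes "is_matching P M" "inj_on f P"
  shows "is_matching (f ` P) ((`) f ` M)"
proof -
  have "f ` A \<subseteq> f ` P \<and> card (f ` A) = 2" if "A \<in> M" for A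
    using is_matching_arc[OF assms(1) that] assms(2) by (metis card_image image_mono inj_on_subset)
  then have arcs: "\<forall>A'\<in>(`) f ` M. A' \<subseteq> f ` P \<and> card A' = 2"
    by blast
  have unique: "\<exists>!A'. A' \<in> (`) f ` M \<and> y \<in> A'" if "y \<in> f ` P" for y
  proof -
    obtain x where x: "x \<in> P" and y: "y = f x"
      using \<open>y \<in> f ` P\<close> by blast
    obtain A where A: "A \<in> M" "x \<in> A"
      using is_matching_covers[OF assms(1) x] by blast
    show ?thesis
      unfolding y
    proof (rule ex1I[of _ "f ` A"])
      show "f ` A \<in> (`) f ` M \<and> f x \<in> f ` A"
        using A by blast
      fix A'
      assume "A' \<in> (`) f ` M \<and> f x \<in> A'"
      then obtain B x' where B: "B \<in> M" "A' = f ` B" "x' \<in> B" "f x' = f x"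
        by auto
      moreover have "x' = x"
        using is_matching_arc[OF assms(1) B(1)] B(3,4) x assms(2) by (auto simp: inj_on_def)
      ultimately show "A' = f ` A"
        using is_matching_unique[OF assms(1) x A] by blast
    qed
  qed
  show ?thesis
    unfolding is_matching_def by (intro conjI[OF arcs] ballI unique)
qed

lemma noncrossing_matchings_arc_nonempty: "M \<in> noncrossing_matchings p P \<Longrightarrow> A \<in> M \<Longrightarrow> A \<noteq> {}"
  using is_matching_arc unfolding noncrossing_matchings_def by fastforce

lemma noncrossing_matchings_arc_subset: "M \<in> noncrossing_matchings p P \<Longrightarrow> A \<in> M \<Longrightarrow> A \<subseteq> P"
  using is_matching_arc unfolding noncrossing_matchings_def by blast

lemma noncrossing_matchings_restrict:
  assumes "M \<in> noncrossing_matchings p P" "S \<subseteq> P"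
    and "\<And>A. A \<in> M \<Longrightarrow> A \<inter> S \<noteq> {} \<Longrightarrow> A \<subseteq> S"
  shows "{A \<in> M. A \<subseteq> S} \<in> noncrossing_matchings p S"
  using assms(1) is_matching_restrict[OF _ assms(2,3)] unfolding noncrossing_matchings_def by auto

lemma noncrossing_matchings_empty: "noncrossing_matchings p {} = {{}}"
  unfolding noncrossing_matchings_def is_matching_def by auto

lemma noncrossing_matchings_singleton: "noncrossing_matchings p {x} = {}"
proof -
  have "\<not> is_matching {x} M" for M
  proof
    assume M: "is_matching {x} M"
    then obtain A where "A \<in> M"
      using is_matching_covers[OF M, of x] by blast
    with is_matching_arc[OF M] have "A \<subseteq> {x}" "card A = 2"
      by blast+
    then show False
      using card_mono[of "{x}" A] by simp
  qed
  then show ?thesis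
    unfolding noncrossing_matchings_def by blast
qed

lemma finite_noncrossing_matchings: "finite P \<Longrightarrow> finite (noncrossing_matchings p P)"
  by (rule finite_subset[of _ "Pow (Pow P)"]) (auto simp: noncrossing_matchings_def is_matching_def)

lemma finite_outer_arcs:
  assumes "finite P" "M \<in> noncrossing_matchings p P"
  shows "finite (outer_arcs p M)"
proof -
  have "outer_arcs p M \<subseteq> Pow P"
    using assms(2) unfolding noncrossing_matchings_def outer_arcs_def is_matching_def by blast
  with assms(1) show ?thesis
    by (simp add: finite_subset)
qed

lemma card_marked_matchings:
  assumes "finite P"
  shows "card (marked_matchings p P) = (\<Sum>M\<in>noncrossing_matchings p P. 2 ^ card (outer_arcs p M))"
proof -
  have "marked_matchings p P = Sigma (noncrossing_matchings p P) (\<lambda>M. Pow (outer_arcs p M))"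
    unfolding marked_matchings_def by auto
  with assms show ?thesis
    by (simp add: card_SigmaI card_Pow finite_noncrossing_matchings finite_outer_arcs)
qed

lemma marked_matchings_image:
  assumes "inj_on f P" "\<And>x. x \<in> P \<Longrightarrow> q (f x) = p x" "(M, D) \<in> marked_matchings p P"
  shows "((`) f ` M, (`) f ` D) \<in> marked_matchings q (f ` P)"
proof -
  have M: "is_matching P M" "\<forall>A\<in>M. \<forall>B\<in>M. \<not> crosses p A B"
    and D: "D \<subseteq> outer_arcs p M"
    using assms(3) unfolding marked_matchings_def noncrossing_matchings_def by auto
  have arcs: "A \<subseteq> P" if "A \<in> M" for A
    using is_matching_arc[OF M(1) that] by blast
  have "crosses q (f ` A) (f ` B) \<longleftrightarrow> crosses p A B" "nested q (f ` A) (f ` B) \<longleftrightarrow> nested p A B"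
    if "A \<in> M" "B \<in> M" for A B
    using arcs[OF that(1)] arcs[OF that(2)] assms(2) unfolding crosses_def nested_def
    by (auto 0 3 simp: subset_iff)
  with M D is_matching_image[OF M(1) assms(1)] show ?thesis
    unfolding marked_matchings_def noncrossing_matchings_def outer_arcs_def by auto
qed

lemma image_image_cancel: "(\<And>A. A \<in> X \<Longrightarrow> h (k A) = A) \<Longrightarrow> h ` k ` X = X"
  by force

lemma marked_matchings_image_cancel:
  assumes "(M, D) \<in> marked_matchings p P" "\<And>x. x \<in> P \<Longrightarrow> h (k x) = x"
  shows "((`) h ` (`) k ` M, (`) h ` (`) k ` D) = (M, D)"
proof -
  have "A \<subseteq> P" if "A \<in> M \<union> D" for A
    using assms(1) that
    unfolding marked_matchings_def noncrossing_matchings_def outer_arcs_def is_matching_def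
    by auto
  then have "h ` k ` A = A" if "A \<in> M \<union> D" for A
    using that assms(2) by (intro image_image_cancel) blast
  then show ?thesis
    by (simp add: image_image_cancel)
qed

lemma card_marked_matchings_reindex:
  assumes "inj_on p P"
  shows "card (marked_matchings p P) = card (marked_matchings id (p ` P))"
proof -
  let ?g = "inv_into P p"
  let ?F = "\<lambda>(M, D). ((`) p ` M, (`) p ` D)" and ?G = "\<lambda>(M, D). ((`) ?g ` M, (`) ?g ` D)"
  have "bij_betw ?F (marked_matchings p P) (marked_matchings id (p ` P))"
  proof (rule bij_betw_byWitness[where f' = ?G])
    show "\<forall>x\<in>marked_matchings p P. ?G (?F x) = x"
    proof
      fix x
      assume "x \<in> marked_matchings p P"
      moreover obtain M D where "x = (M, D)"
        by fastforce
      ultimately show "?G (?F x) = x"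
        using marked_matchings_image_cancel[of M D p P ?g p] assms by simp
    qed
    show "\<forall>x\<in>marked_matchings id (p ` P). ?F (?G x) = x"
    proof
      fix x
      assume "x \<in> marked_matchings id (p ` P)"
      moreover obtain M D where "x = (M, D)"
        by fastforce
      ultimately show "?F (?G x) = x"
        using marked_matchings_image_cancel[of M D id "p ` P" p ?g] by (simp add: f_inv_into_f)
    qed
    show "?F ` marked_matchings p P \<subseteq> marked_matchings id (p ` P)"
      using marked_matchings_image[OF assms, where q = id] by auto
    have "marked_matchings p (?g ` p ` P) = marked_matchings p P"
      using assms by simp
    then show "?G ` marked_matchings id (p ` P) \<subseteq> marked_matchings p P"
      using marked_matchings_image[OF inj_on_inv_into[OF order_refl], where q = p and p = id]
      by (auto simp: f_inv_into_f)
  qed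
  then show ?thesis
    by (rule bij_betw_same_card)
qed

section \<open>Matchings of an interval\<close>

abbreviation nc_matchings :: "nat set \<Rightarrow> nat set set set" where
  "nc_matchings \<equiv> noncrossing_matchings id"

lemma not_crosses_separated:
  "\<forall>x\<in>A. \<forall>z\<in>B. x < z \<Longrightarrow> \<not> crosses id A B \<and> \<not> crosses id B A"
  unfolding crosses_def by force

lemma not_crosses_inside:
  "\<forall>z\<in>B. c < z \<and> z < d \<Longrightarrow> A \<subseteq> {c, d} \<Longrightarrow> \<not> crosses id A B \<and> \<not> crosses id B A"
  unfolding crosses_def by fastforce

definition join_arc :: "nat \<Rightarrow> nat \<Rightarrow> nat set set \<times> nat set set \<Rightarrow> nat set set" where
  "join_arc a y MN = insert {a, y} (fst MN \<union> snd MN)"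

lemma join_arc_noncrossing:
  assumes "a < y" "y < e"
    and M1: "M1 \<in> nc_matchings {Suc a..<y}" and M2: "M2 \<in> nc_matchings {Suc y..<e}"
  shows "join_arc a y (M1, M2) \<in> nc_matchings {a..<e}"
proof -
  note arcs1 = noncrossing_matchings_arc_subset[OF M1]
    and arcs2 = noncrossing_matchings_arc_subset[OF M2]
  have "is_matching ({a, y} \<union> ({Suc a..<y} \<union> {Suc y..<e})) ({{a, y}} \<union> (M1 \<union> M2))"
    using assms is_matching_doubleton[of a y]
    by (intro is_matching_Un) (auto simp: noncrossing_matchings_def)
  moreover have "{a, y} \<union> ({Suc a..<y} \<union> {Suc y..<e}) = {a..<e}"
    using assms(1,2) by auto
  moreover have "\<not> crosses id A B"
    if "A \<in> join_arc a y (M1, M2)" "B \<in> join_arc a y (M1, M2)" for A B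
  proof -
    have "\<not> crosses id A B" if "A \<in> M1 \<and> B \<in> M1 \<or> A \<in> M2 \<and> B \<in> M2" for A B
      using that M1 M2 unfolding noncrossing_matchings_def by blast
    moreover have "\<not> crosses id A B \<and> \<not> crosses id B A" if "A \<in> M1" "B \<in> M2" for A B
      using arcs1[OF that(1)] arcs2[OF that(2)] by (intro not_crosses_separated) force
    moreover have "\<not> crosses id {a, y} A \<and> \<not> crosses id A {a, y}" if "A \<in> M1" for A
      using arcs1[OF that] by (intro not_crosses_inside[of _ a y]) auto
    moreover have "\<not> crosses id {a, y} A \<and> \<not> crosses id A {a, y}" if "A \<in> M2" for A
      using arcs2[OF that] \<open>a < y\<close> by (intro not_crosses_separated) force
    moreover have "\<not> crosses id {a, y} {a, y}"
      unfolding crosses_def by auto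
    ultimately show ?thesis
      using that unfolding join_arc_def by auto
  qed
  ultimately show ?thesis
    unfolding noncrossing_matchings_def join_arc_def by auto
qed

lemma first_arc_partition:
  assumes M: "M \<in> nc_matchings {a..<e}" and ay: "{a, y} \<in> M" "a < y" and C: "C \<in> M"
  shows "C = {a, y} \<or> C \<subseteq> {Suc a..<y} \<or> C \<subseteq> {Suc y..<e}"
proof -
  have match: "is_matching {a..<e} M" and nc: "\<not> crosses id {a, y} C"
    using M ay(1) C unfolding noncrossing_matchings_def by blast+
  show ?thesis
  proof (cases "C \<inter> {a, y} = {}")
    case False
    then obtain x where x: "x \<in> C" "x \<in> {a, y}"
      by blast
    moreover have "{a, y} \<subseteq> {a..<e}"
      using is_matching_arc[OF match ay(1)] by blast
    ultimately have "C = {a, y}"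
      using is_matching_unique[OF match _ C x(1) ay(1)] by blast
    then show ?thesis ..
  next
    case True
    have C_range: "C \<subseteq> {Suc a..<y} \<union> {Suc y..<e}"
      using True is_matching_arc[OF match C] by fastforce
    then have no_straddle: "\<not> (\<exists>x\<in>C. \<exists>z\<in>C. x < y \<and> y < z)"
      using nc unfolding crosses_def by fastforce
    show ?thesis
    proof (cases "\<exists>x\<in>C. x < y")
      case True
      with no_straddle C_range have "C \<subseteq> {Suc a..<y}"
        by fastforce
      then show ?thesis
        by blast
    next
      case False
      with C_range have "C \<subseteq> {Suc y..<e}"
        by fastforce
      then show ?thesis
        by blast
    qed
  qed
qed

lemma nc_matchings_first_arc_decomposition:
  assumes "a < e"
  shows "nc_matchings {a..<e} =
    (\<Union>y\<in>{Suc a..<e}. join_arc a y ` (nc_matchings {Suc a..<y} \<times> nc_matchings {Suc y..<e}))"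
proof (intro equalityI subsetI)
  fix M
  assume M: "M \<in> nc_matchings {a..<e}"
  then have match: "is_matching {a..<e} M"
    unfolding noncrossing_matchings_def by blast
  obtain A where A: "A \<in> M" "a \<in> A"
    using is_matching_covers[OF match] assms by auto
  then obtain y where Ay: "A = {a, y}" "y \<noteq> a"
    using is_matching_arc[OF match A(1)] by (auto simp: card_2_iff)
  with is_matching_arc[OF match A(1)] have y: "y \<in> {Suc a..<e}"
    by auto
  have partition: "C = {a, y} \<or> C \<subseteq> {Suc a..<y} \<or> C \<subseteq> {Suc y..<e}" if "C \<in> M" for C
    using first_arc_partition[OF M _ _ that] A Ay y by auto
  let ?M1 = "{C \<in> M. C \<subseteq> {Suc a..<y}}" and ?M2 = "{C \<in> M. C \<subseteq> {Suc y..<e}}"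
  have "C \<subseteq> {Suc a..<y}" if "C \<in> M" "C \<inter> {Suc a..<y} \<noteq> {}" for C
    using partition[OF that(1)] that(2) by auto
  moreover have "C \<subseteq> {Suc y..<e}" if "C \<in> M" "C \<inter> {Suc y..<e} \<noteq> {}" for C
    using partition[OF that(1)] that(2) y by auto
  ultimately have "?M1 \<in> nc_matchings {Suc a..<y}" "?M2 \<in> nc_matchings {Suc y..<e}"
    using y by (auto intro!: noncrossing_matchings_restrict[OF M])
  moreover have "M = join_arc a y (?M1, ?M2)"
    using partition A Ay unfolding join_arc_def by auto
  ultimately show "M \<in> (\<Union>y\<in>{Suc a..<e}.
      join_arc a y ` (nc_matchings {Suc a..<y} \<times> nc_matchings {Suc y..<e}))"
    using y by blast
qed (auto intro: join_arc_noncrossing)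

lemma join_arc_restrict:
  assumes "a < y" "M1 \<in> nc_matchings {Suc a..<y}" "M2 \<in> nc_matchings {Suc y..<e}"
  shows "{A \<in> join_arc a y (M1, M2). A \<subseteq> {Suc a..<y}} = M1"
    and "{A \<in> join_arc a y (M1, M2). A \<subseteq> {Suc y..<e}} = M2"
proof -
  have "\<not> A \<subseteq> {Suc a..<y}" if "A \<in> M2" for A
    using noncrossing_matchings_arc_nonempty[OF assms(3) that]
      noncrossing_matchings_arc_subset[OF assms(3) that]
    by fastforce
  with assms show "{A \<in> join_arc a y (M1, M2). A \<subseteq> {Suc a..<y}} = M1"
    unfolding join_arc_def by (auto dest: noncrossing_matchings_arc_subset)
  have "\<not> A \<subseteq> {Suc y..<e}" if "A \<in> M1" for A
    using noncrossing_matchings_arc_nonempty[OF assms(2) that]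
      noncrossing_matchings_arc_subset[OF assms(2) that]
    by fastforce
  with assms show "{A \<in> join_arc a y (M1, M2). A \<subseteq> {Suc y..<e}} = M2"
    unfolding join_arc_def by (auto dest: noncrossing_matchings_arc_subset)
qed

lemma inj_on_join_arc:
  assumes "a < y"
  shows "inj_on (join_arc a y) (nc_matchings {Suc a..<y} \<times> nc_matchings {Suc y..<e})"
proof (rule inj_onI)
  fix N N'
  assume N: "N \<in> nc_matchings {Suc a..<y} \<times> nc_matchings {Suc y..<e}"
    and N': "N' \<in> nc_matchings {Suc a..<y} \<times> nc_matchings {Suc y..<e}"
    and eq: "join_arc a y N = join_arc a y N'"
  obtain M1 M2 M1' M2' where N_def: "N = (M1, M2)" and N'_def: "N' = (M1', M2')"
    by fastforce
  have M: "M1 \<in> nc_matchings {Suc a..<y}" "M2 \<in> nc_matchings {Suc y..<e}"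
    and M': "M1' \<in> nc_matchings {Suc a..<y}" "M2' \<in> nc_matchings {Suc y..<e}"
    using N N' unfolding N_def N'_def by auto
  have "M1 = M1'" "M2 = M2'"
    using eq join_arc_restrict[OF assms M] join_arc_restrict[OF assms M']
    unfolding N_def N'_def by metis+
  then show "N = N'"
    unfolding N_def N'_def by simp
qed

lemma join_arc_images_disjoint:
  assumes "y \<noteq> y'" "a < y'"
  shows "join_arc a y ` (nc_matchings {Suc a..<y} \<times> nc_matchings {Suc y..<e}) \<inter>
    join_arc a y' ` (nc_matchings {Suc a..<y'} \<times> nc_matchings {Suc y'..<e}) = {}"
proof -
  have "{a, y} \<notin> join_arc a y' (M1, M2)"
    if "M1 \<in> nc_matchings {Suc a..<y'}" "M2 \<in> nc_matchings {Suc y'..<e}" for M1 M2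
  proof -
    have "{a, y} \<notin> M1" "{a, y} \<notin> M2"
      using assms(2) noncrossing_matchings_arc_subset[OF that(1)]
        noncrossing_matchings_arc_subset[OF that(2)]
      by force+
    moreover have "{a, y} \<noteq> {a, y'}"
      using assms(1) by (auto simp: doubleton_eq_iff)
    ultimately show ?thesis
      unfolding join_arc_def by simp
  qed
  moreover have "{a, y} \<in> join_arc a y N" for N
    unfolding join_arc_def by simp
  ultimately show ?thesis
    by blast
qed

lemma outer_arcs_join_arc:
  assumes "a < y" "y < e"
    and M1: "M1 \<in> nc_matchings {Suc a..<y}" and M2: "M2 \<in> nc_matchings {Suc y..<e}"
  shows "outer_arcs id (join_arc a y (M1, M2)) = insert {a, y} (outer_arcs id M2)"
proof -
  let ?M = "join_arc a y (M1, M2)"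
  have left: "Suc a \<le> x \<and> x < y" if "A \<in> M1" "x \<in> A" for A x
    using noncrossing_matchings_arc_subset[OF M1 that(1)] that(2) by auto
  have right: "Suc y \<le> x" if "A \<in> M2" "x \<in> A" for A x
    using noncrossing_matchings_arc_subset[OF M2 that(1)] that(2) by auto
  have members: "A \<in> ?M \<longleftrightarrow> A = {a, y} \<or> A \<in> M1 \<or> A \<in> M2" for A
    unfolding join_arc_def by auto
  have first_outer: "\<not> nested id {a, y} B" if "B \<in> ?M" for B
    using that left right \<open>a < y\<close> unfolding members nested_def by fastforce
  have inner_nested: "nested id A {a, y}" if "A \<in> M1" for A
    using left[OF that] unfolding nested_def by fastforce
  have right_not_nested: "\<not> nested id A B" if A: "A \<in> M2" and B: "B \<in> insert {a, y} M1" for A B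
  proof
    assume "nested id A B"
    then obtain d where d: "d \<in> B" "\<forall>x\<in>A. x < d"
      unfolding nested_def by auto
    obtain x where x: "x \<in> A"
      using noncrossing_matchings_arc_nonempty[OF M2 A] by blast
    have "d \<le> y"
      using B d(1) left \<open>a < y\<close> by force
    with d(2) x right[OF A x] show False
      by force
  qed
  show ?thesis
  proof (intro equalityI subsetI)
    fix A
    assume "A \<in> outer_arcs id ?M"
    then have A: "A \<in> ?M" and not_nested: "\<forall>B\<in>?M. \<not> nested id A B"
      unfolding outer_arcs_def by auto
    then consider "A = {a, y}" | "A \<in> M1" | "A \<in> M2"
      unfolding members by blast
    then show "A \<in> insert {a, y} (outer_arcs id M2)"
    proof cases
      case 2
      with inner_nested not_nested members show ?thesis
        by blast
    next
      case 3
      with not_nested members show ?thesis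
        unfolding outer_arcs_def by blast
    qed simp
  next
    fix A
    assume "A \<in> insert {a, y} (outer_arcs id M2)"
    then consider "A = {a, y}" | "A \<in> M2" "\<forall>B\<in>M2. \<not> nested id A B"
      unfolding outer_arcs_def by blast
    then show "A \<in> outer_arcs id ?M"
    proof cases
      case 1
      with first_outer members show ?thesis
        unfolding outer_arcs_def by blast
    next
      case 2
      with right_not_nested members show ?thesis
        unfolding outer_arcs_def by blast
    qed
  qed
qed

lemma sum_nc_matchings_first_arc:
  assumes "a < e"
  shows "(\<Sum>M\<in>nc_matchings {a..<e}. w M) =
    (\<Sum>y\<in>{Suc a..<e}. \<Sum>N\<in>nc_matchings {Suc a..<y} \<times> nc_matchings {Suc y..<e}. w (join_arc a y N))"
proof -
  have "(\<Sum>M\<in>nc_matchings {a..<e}. w M) =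
      (\<Sum>y\<in>{Suc a..<e}.
        \<Sum>M\<in>join_arc a y ` (nc_matchings {Suc a..<y} \<times> nc_matchings {Suc y..<e}). w M)"
    unfolding nc_matchings_first_arc_decomposition[OF assms]
    by (rule sum.UNION_disjoint) (auto simp: finite_noncrossing_matchings join_arc_images_disjoint)
  also have "\<dots> = (\<Sum>y\<in>{Suc a..<e}.
      \<Sum>N\<in>nc_matchings {Suc a..<y} \<times> nc_matchings {Suc y..<e}. w (join_arc a y N))"
    by (intro sum.cong refl sum.reindex[OF inj_on_join_arc, unfolded comp_def]) simp
  finally show ?thesis .
qed

lemma sum_Times_snd: "finite A \<Longrightarrow> finite B \<Longrightarrow> (\<Sum>N\<in>A \<times> B. f (snd N)) = card A * sum f B"
  using sum.cartesian_product[of "\<lambda>_ y. f y" B A] by (simp add: case_prod_beta')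

lemma card_nc_matchings_first_arc:
  assumes "a < e"
  shows "card (nc_matchings {a..<e}) =
    (\<Sum>y\<in>{Suc a..<e}. card (nc_matchings {Suc a..<y}) * card (nc_matchings {Suc y..<e}))"
  using sum_nc_matchings_first_arc[OF assms, of "\<lambda>_. 1 :: nat"]
  by (simp add: card_cartesian_product)

lemma card_marked_matchings_first_arc:
  assumes "a < e"
  shows "card (marked_matchings id {a..<e}) =
    (\<Sum>y\<in>{Suc a..<e}. 2 * card (nc_matchings {Suc a..<y}) * card (marked_matchings id {Suc y..<e}))"
proof -
  let ?w = "\<lambda>M. 2 ^ card (outer_arcs id M) :: nat"
  have "?w (join_arc a y N) = 2 * ?w (snd N)"
    if y: "y \<in> {Suc a..<e}" and N: "N \<in> nc_matchings {Suc a..<y} \<times> nc_matchings {Suc y..<e}" for y N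
  proof -
    obtain M1 M2 where N: "N = (M1, M2)"
      and M1: "M1 \<in> nc_matchings {Suc a..<y}" and M2: "M2 \<in> nc_matchings {Suc y..<e}"
      using N by fastforce
    have "{a, y} \<notin> outer_arcs id M2"
      using noncrossing_matchings_arc_subset[OF M2] unfolding outer_arcs_def by fastforce
    moreover have "outer_arcs id (join_arc a y N) = insert {a, y} (outer_arcs id M2)"
      unfolding N using y M1 M2 by (intro outer_arcs_join_arc) auto
    moreover have "finite (outer_arcs id M2)"
      using finite_outer_arcs[OF _ M2] by simp
    ultimately show ?thesis
      unfolding N by simp
  qed
  then have "card (marked_matchings id {a..<e}) =
      (\<Sum>y\<in>{Suc a..<e}. \<Sum>N\<in>nc_matchings {Suc a..<y} \<times> nc_matchings {Suc y..<e}. 2 * ?w (snd N))"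
    unfolding card_marked_matchings[OF finite_atLeastLessThan] sum_nc_matchings_first_arc[OF assms]
    by (intro sum.cong) auto
  also have "\<dots> = (\<Sum>y\<in>{Suc a..<e}.
      card (nc_matchings {Suc a..<y}) * (\<Sum>M\<in>nc_matchings {Suc y..<e}. 2 * ?w M))"
    by (intro sum.cong refl sum_Times_snd finite_noncrossing_matchings finite_atLeastLessThan)
  also have "\<dots> = (\<Sum>y\<in>{Suc a..<e}.
      2 * card (nc_matchings {Suc a..<y}) * card (marked_matchings id {Suc y..<e}))"
    by (simp add: card_marked_matchings sum_distrib_left mult_ac)
  finally show ?thesis .
qed

lemma sum_first_arc_reindex:
  "(\<Sum>y\<in>{Suc a..<a + Suc (Suc n)}. g {Suc a..<y} {Suc y..<a + Suc (Suc n)}) =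
    (\<Sum>i\<le>n. g {Suc a..<Suc a + i} {Suc (Suc a + i)..<Suc (Suc a + i) + (n - i)})"
  by (rule sum.reindex_bij_witness[of _ "\<lambda>i. Suc a + i" "\<lambda>y. y - Suc a"]) (auto simp: algebra_simps)

lemma card_nc_matchings_eq_card_dyck_words:
  "card (nc_matchings {a..<a + n}) = card (dyck_words n)"
proof (induction n arbitrary: a rule: less_induct)
  case (less n)
  consider "n = 0" | "n = 1" | m where "n = Suc (Suc m)"
    by (metis One_nat_def not0_implies_Suc)
  then show ?case
  proof cases
    case 3
    have "card (nc_matchings {a..<a + n}) =
        (\<Sum>y\<in>{Suc a..<a + Suc (Suc m)}.
          card (nc_matchings {Suc a..<y}) * card (nc_matchings {Suc y..<a + Suc (Suc m)}))"
      using card_nc_matchings_first_arc[of a "a + n"] 3 by simp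
    also have "\<dots> = (\<Sum>i\<le>m. card (nc_matchings {Suc a..<Suc a + i}) *
        card (nc_matchings {Suc (Suc a + i)..<Suc (Suc a + i) + (m - i)}))"
      by (rule sum_first_arc_reindex)
    also have "\<dots> = (\<Sum>i\<le>m. card (dyck_words i) * card (dyck_words (m - i)))"
    proof (intro sum.cong refl)
      fix i
      assume "i \<in> {..m}"
      then have "i < n" "m - i < n"
        using 3 by auto
      then show "card (nc_matchings {Suc a..<Suc a + i}) *
          card (nc_matchings {Suc (Suc a + i)..<Suc (Suc a + i) + (m - i)}) =
          card (dyck_words i) * card (dyck_words (m - i))"
        by (simp only: less.IH)
    qed
    also have "\<dots> = card (dyck_words n)"
      unfolding 3 card_dyck_words_Suc_Suc ..
    finally show ?thesis .
  qed (simp_all add: noncrossing_matchings_empty noncrossing_matchings_singleton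
      card_dyck_words_0 card_dyck_words_Suc_0)
qed

lemma card_marked_matchings_eq_card_balanced_words:
  "card (marked_matchings id {a..<a + n}) = card (balanced_words n)"
proof (induction n arbitrary: a rule: less_induct)
  case (less n)
  consider "n = 0" | "n = 1" | m where "n = Suc (Suc m)"
    by (metis One_nat_def not0_implies_Suc)
  then show ?case
  proof cases
    case 3
    have "card (marked_matchings id {a..<a + n}) =
        (\<Sum>y\<in>{Suc a..<a + Suc (Suc m)}. 2 * card (nc_matchings {Suc a..<y}) *
          card (marked_matchings id {Suc y..<a + Suc (Suc m)}))"
      using card_marked_matchings_first_arc[of a "a + n"] 3 by simp
    also have "\<dots> = (\<Sum>i\<le>m. 2 * card (nc_matchings {Suc a..<Suc a + i}) *
        card (marked_matchings id {Suc (Suc a + i)..<Suc (Suc a + i) + (m - i)}))"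
      by (rule sum_first_arc_reindex)
    also have "\<dots> = (\<Sum>i\<le>m. 2 * card (dyck_words i) * card (balanced_words (m - i)))"
    proof (intro sum.cong refl)
      fix i
      assume "i \<in> {..m}"
      then have "m - i < n"
        using 3 by auto
      then show "2 * card (nc_matchings {Suc a..<Suc a + i}) *
          card (marked_matchings id {Suc (Suc a + i)..<Suc (Suc a + i) + (m - i)}) =
          2 * card (dyck_words i) * card (balanced_words (m - i))"
        by (simp only: less.IH card_nc_matchings_eq_card_dyck_words)
    qed
    also have "\<dots> = card (balanced_words n)"
      unfolding 3 card_balanced_words_Suc_Suc by (simp add: sum_distrib_left mult.assoc)
    finally show ?thesis .
  qed (simp_all add: card_marked_matchings noncrossing_matchings_empty noncrossing_matchings_singleton
      card_balanced_words_0 card_balanced_words_Suc_0 outer_arcs_def)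
qed

section \<open>Marked Temperley--Lieb diagrams\<close>

lemma card_2_doubleton: "card A = 2 \<Longrightarrow> x \<in> A \<Longrightarrow> z \<in> A \<Longrightarrow> x \<noteq> z \<Longrightarrow> A = {x, z}"
  by (auto simp: card_2_iff)

lemma crossing_eq_crosses:
  assumes "card A = 2" "card B = 2"
  shows "crossing t s A B \<longleftrightarrow> crosses (pos t s) A B"
proof
  assume "crosses (pos t s) A B"
  then obtain x z c d where "x \<in> A" "z \<in> A" "c \<in> B" "d \<in> B"
    and order: "pos t s x < pos t s c" "pos t s c < pos t s z" "pos t s z < pos t s d"
    unfolding crosses_def by blast
  moreover from order have "x \<noteq> z" "c \<noteq> d"
    by auto
  ultimately show "crossing t s A B"
    using assms card_2_doubleton unfolding crossing_def by metis
qed (auto simp: crossing_def crosses_def)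

lemma nested_in_eq_nested:
  assumes "card B = 2" "A \<noteq> {}"
  shows "nested_in t s A B \<longleftrightarrow> nested (pos t s) A B"
proof
  assume "nested (pos t s) A B"
  then obtain c d where "c \<in> B" "d \<in> B"
    and between: "\<forall>x\<in>A. pos t s c < pos t s x \<and> pos t s x < pos t s d"
    unfolding nested_def by blast
  moreover have "c \<noteq> d"
    using between assms(2) by force
  ultimately show "nested_in t s A B"
    using assms(1) card_2_doubleton unfolding nested_in_def by metis
qed (auto simp: nested_in_def nested_def)

lemma marked_diagrams_eq_marked_matchings:
  "marked_diagrams t s = marked_matchings (pos t s) (pts t s)"
proof -
  have TL: "TL_diagrams t s = noncrossing_matchings (pos t s) (pts t s)"
    unfolding TL_diagrams_def noncrossing_matchings_def perfect_matching_eq_is_matching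
      is_matching_def
    using crossing_eq_crosses by (auto 0 4)
  have "leftmost_arcs t s M = outer_arcs (pos t s) M" if "M \<in> TL_diagrams t s" for M
  proof -
    have "card A = 2" "A \<noteq> {}" if "A \<in> M" for A
      using \<open>M \<in> TL_diagrams t s\<close> that
      unfolding TL_diagrams_def perfect_matching_def by auto
    then show ?thesis
      unfolding leftmost_arcs_def outer_arcs_def using nested_in_eq_nested by blast
  qed
  then show ?thesis
    unfolding marked_diagrams_def marked_matchings_def TL[symmetric] by auto
qed

lemma inj_on_pos: "inj_on (pos t s) (pts t s)"
  unfolding inj_on_def pts_def by auto

lemma pos_image: "pos t s ` pts t s = {0..<t + s}"
proof (intro equalityI subsetI)
  fix x
  assume x: "x \<in> {0..<t + s}"
  show "x \<in> pos t s ` pts t s"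
  proof (cases "x < t")
    case True
    then show ?thesis
      unfolding pts_def by (auto intro: image_eqI[of _ _ "Bot x"])
  next
    case False
    with x have "x = pos t s (Top (t + s - 1 - x))" "Top (t + s - 1 - x) \<in> pts t s"
      unfolding pts_def by auto
    then show ?thesis
      by blast
  qed
qed (auto simp: pts_def)

lemma b_eq_card_balanced_words: "b t s = card (balanced_words (t + s))"
proof -
  have "b t s = card (marked_matchings (pos t s) (pts t s))"
    unfolding b_def marked_diagrams_eq_marked_matchings ..
  also have "\<dots> = card (marked_matchings id {0..<0 + (t + s)})"
    using card_marked_matchings_reindex[OF inj_on_pos] by (simp add: pos_image)
  also have "\<dots> = card (balanced_words (t + s))"
    by (rule card_marked_matchings_eq_card_balanced_words)
  finally show ?thesis .
qed

theorem proposition5p2: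
  fixes t k m :: nat
  assumes "t + k = m"
  shows "(\<forall>t' k'. t' + k' = m \<longrightarrow> b t' (t' + 2 * k') = b t (t + 2 * k))
         \<and> b t (t + 2 * k) = (2 * m) choose m"
proof -
  have "b t' (t' + 2 * k') = (2 * m) choose m" if "t' + k' = m" for t' k'
  proof -
    have "t' + (t' + 2 * k') = 2 * m"
      using that by simp
    then show ?thesis
      by (simp add: b_eq_card_balanced_words card_balanced_words)
  qed
  with assms show ?thesis
    by simp
qed

end
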